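(* Let $\mathsf V$ be a quantale, $X=(X,a)$ a $\mathsf V$-category, $(x_n)_{n\in\mathbb N}$ a Cauchy sequence in $X$ and $x\in X$. Then $$\bigvee_{N}\bigwedge_{n\ge N}a(x_n,x)=\bigwedge_{N}\bigvee_{n\ge N}a(x_n,x)\quad\text{and}\quad\bigvee_{N}\bigwedge_{n\ge N}a(x,x_n)=\bigwedge_{N}\bigvee_{n\ge N}a(x,x_n).$$
   Context: A quantale $(\mathsf V,\otimes,k)$ is a complete anti-symmetric lattice with an associative, commutative operation $\otimes$ with neutral element $k$ distributing over arbitrary suprema. A $\mathsf V$-category $(X,a)$ is a set with $a:X\times X\to\mathsf V$ such that $k\le a(x,x)$ and $a(x,y)\otimes a(y,z)\le a(x,z)$. A sequence $s=(x_n)$ is Cauchy if $k\le\bigvee_{N}\bigwedge_{n,m\ge N}a(x_n,x_m)$. *)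

theory Defs
  imports Main
begin

definition quantale :: "('v::complete_lattice \<Rightarrow> 'v \<Rightarrow> 'v) \<Rightarrow> 'v \<Rightarrow> bool" where
  "quantale tensor k \<longleftrightarrow>
     (\<forall>u v w. tensor (tensor u v) w = tensor u (tensor v w)) \<and>
     (\<forall>u v. tensor u v = tensor v u) \<and>
     (\<forall>u. tensor k u = u) \<and>
     (\<forall>u S. tensor u (Sup S) = (SUP s\<in>S. tensor u s))"

definition V_category :: "('v::complete_lattice \<Rightarrow> 'v \<Rightarrow> 'v) \<Rightarrow> 'v \<Rightarrow> ('x \<Rightarrow> 'x \<Rightarrow> 'v) \<Rightarrow> bool" where
  "V_category tensor k a \<longleftrightarrow>
     (\<forall>x. k \<le> a x x) \<and> (\<forall>x y z. tensor (a x y) (a y z) \<le> a x z)"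

definition V_cauchy :: "'v::complete_lattice \<Rightarrow> ('x \<Rightarrow> 'x \<Rightarrow> 'v) \<Rightarrow> (nat \<Rightarrow> 'x) \<Rightarrow> bool" where
  "V_cauchy k a s \<longleftrightarrow> k \<le> (SUP N. INF n\<in>{N..}. INF m\<in>{N..}. a (s n) (s m))"

end

theory Submission
  imports Defs "HOL-Library.Liminf_Limsup"
begin

text \<open>Since liminf \<le> limsup holds in any complete lattice, only limsup \<le> liminf needs proof.
  With c N the infimum of all a(x_n, x_m) for n, m \<ge> N, the triangle inequality gives
  c N \<otimes> a(x_m, x) \<le> a(x_n, x) for all n, m \<ge> N, hence c N \<otimes> limsup \<le> a(x_n, x).
  As k \<le> sup_N c N, the limsup is below sup_N c N \<otimes> limsup \<le> liminf.
  The second equation is the first one for the dual V-category (x, y) \<mapsto> a(y, x).\<close>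

lemma quantale_tensor_SUP_distrib:
  assumes "quantale tensor k"
  shows "tensor u (SUP i\<in>I. f i) = (SUP i\<in>I. tensor u (f i))"
  using assms unfolding quantale_def by (simp add: image_image)

lemma quantale_tensor_commute:
  assumes "quantale tensor k"
  shows "tensor u v = tensor v u"
  using assms unfolding quantale_def by blast

lemma quantale_tensor_unit:
  assumes "quantale tensor k"
  shows "tensor k u = u"
  using assms unfolding quantale_def by blast

lemma quantale_tensor_SUP_distrib_right:
  assumes "quantale tensor k"
  shows "tensor (SUP i\<in>I. f i) u = (SUP i\<in>I. tensor (f i) u)"
  using quantale_tensor_SUP_distrib[OF assms] by (simp add: quantale_tensor_commute[OF assms, of _ u])

lemma quantale_tensor_mono_right:
  assumes "quantale tensor k" "u \<le> v"
  shows "tensor w u \<le> tensor w v"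
proof -
  have "tensor w v = tensor w (SUP i\<in>{u, v}. i)"
    using assms(2) by (simp add: sup_absorb2)
  also have "\<dots> = sup (tensor w u) (tensor w v)"
    using quantale_tensor_SUP_distrib[OF assms(1), of w id "{u, v}"] by simp
  finally show ?thesis
    unfolding le_iff_sup by (rule sym)
qed

lemma quantale_tensor_mono:
  assumes "quantale tensor k" "u \<le> v" "w \<le> z"
  shows "tensor u w \<le> tensor v z"
proof -
  have "tensor u w \<le> tensor u z"
    using quantale_tensor_mono_right[OF assms(1,3)] .
  also have "\<dots> = tensor z u"
    by (rule quantale_tensor_commute[OF assms(1)])
  also have "\<dots> \<le> tensor z v"
    using quantale_tensor_mono_right[OF assms(1,2)] .
  also have "\<dots> = tensor v z"
    by (rule quantale_tensor_commute[OF assms(1)])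
  finally show ?thesis .
qed

lemma V_category_dual:
  assumes "quantale tensor k" "V_category tensor k a"
  shows "V_category tensor k (\<lambda>x y. a y x)"
  unfolding V_category_def
proof (intro conjI allI)
  fix x y z
  have "tensor (a y x) (a z y) = tensor (a z y) (a y x)"
    by (rule quantale_tensor_commute[OF assms(1)])
  also have "\<dots> \<le> a z x"
    using assms(2) unfolding V_category_def by blast
  finally show "tensor (a y x) (a z y) \<le> a z x" .
qed (use assms(2) in \<open>simp add: V_category_def\<close>)

lemma V_cauchy_dual:
  assumes "V_cauchy k a s"
  shows "V_cauchy k (\<lambda>x y. a y x) s"
  using assms unfolding V_cauchy_def by (subst INF_commute)

lemma V_cauchy_limsup_le_liminf:
  assumes q: "quantale tensor k" and cat: "V_category tensor k a" and cauchy: "V_cauchy k a s"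
  shows "limsup (\<lambda>n. a (s n) x) \<le> liminf (\<lambda>n. a (s n) x)"
proof -
  define L where "L = limsup (\<lambda>n. a (s n) x)"
  define c where "c N = (INF n\<in>{N..}. INF m\<in>{N..}. a (s n) (s m))" for N
  have c_le: "c N \<le> a (s n) (s m)" if "N \<le> n" "N \<le> m" for N n m
    unfolding c_def using that by (intro INF_lower2[of n] INF_lower) auto
  have "tensor (c N) L \<le> (INF n\<in>{N..}. a (s n) x)" for N
  proof (rule INF_greatest)
    fix n assume "n \<in> {N..}"
    have "tensor (c N) L \<le> tensor (c N) (SUP m\<in>{N..}. a (s m) x)"
      unfolding L_def limsup_INF_SUP by (rule quantale_tensor_mono_right[OF q]) (rule INF_lower, simp)
    also have "\<dots> = (SUP m\<in>{N..}. tensor (c N) (a (s m) x))"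
      by (rule quantale_tensor_SUP_distrib[OF q])
    also have "\<dots> \<le> a (s n) x"
    proof (rule SUP_least)
      fix m assume "m \<in> {N..}"
      then have "tensor (c N) (a (s m) x) \<le> tensor (a (s n) (s m)) (a (s m) x)"
        using \<open>n \<in> {N..}\<close> c_le by (simp add: quantale_tensor_mono[OF q])
      also have "\<dots> \<le> a (s n) x"
        using cat unfolding V_category_def by blast
      finally show "tensor (c N) (a (s m) x) \<le> a (s n) x" .
    qed
    finally show "tensor (c N) L \<le> a (s n) x" .
  qed
  then have "(SUP N. tensor (c N) L) \<le> liminf (\<lambda>n. a (s n) x)"
    unfolding liminf_SUP_INF by (meson SUP_mono UNIV_I)
  moreover have "L \<le> (SUP N. tensor (c N) L)"
  proof -
    have "L = tensor k L"
      by (simp add: quantale_tensor_unit[OF q])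
    also have "\<dots> \<le> tensor (SUP N. c N) L"
      using cauchy unfolding V_cauchy_def c_def by (simp add: quantale_tensor_mono[OF q])
    finally show ?thesis
      by (simp add: quantale_tensor_SUP_distrib_right[OF q])
  qed
  ultimately show ?thesis
    unfolding L_def by (rule order_trans[rotated])
qed

lemma V_cauchy_liminf_eq_limsup:
  assumes "quantale tensor k" "V_category tensor k a" "V_cauchy k a s"
  shows "liminf (\<lambda>n. a (s n) x) = limsup (\<lambda>n. a (s n) x)"
  using V_cauchy_limsup_le_liminf[OF assms] Liminf_le_Limsup[OF trivial_limit_sequentially]
  by (rule order_antisym[rotated])

theorem corollary3p12:
  fixes tensor :: "'v::complete_lattice \<Rightarrow> 'v \<Rightarrow> 'v" and k :: 'v
    and a :: "'x \<Rightarrow> 'x \<Rightarrow> 'v" and s :: "nat \<Rightarrow> 'x" and x :: 'x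
  assumes "quantale tensor k"
    and "V_category tensor k a"
    and "V_cauchy k a s"
  shows "(SUP N. INF n\<in>{N..}. a (s n) x) = (INF N. SUP n\<in>{N..}. a (s n) x)
       \<and> (SUP N. INF n\<in>{N..}. a x (s n)) = (INF N. SUP n\<in>{N..}. a x (s n))"
  using V_cauchy_liminf_eq_limsup[OF assms]
    V_cauchy_liminf_eq_limsup[OF assms(1) V_category_dual[OF assms(1,2)] V_cauchy_dual[OF assms(3)]]
  unfolding liminf_SUP_INF limsup_INF_SUP by simp

end
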